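(* (Energy preservation of the KZ power spectral density.) Let $\omega_0>0$, $z\ge 0$, $\epsilon>0$, and let $(S^0_k)_{k\in\mathbb{Z}}$ be a finitely supported sequence of real numbers. Define for $k\in\mathbb{Z}$ $$S^{\mathrm{KZ}}_k(z):=S^0_k+8\epsilon^2\sum_{(l,m,n)\in\mathrm{nr}_k}|H_{lmnk}(z)|^2\,T_{lmnk},$$ with $T_{lmnk}:=S^0_lS^0_mS^0_n+S^0_lS^0_mS^0_k-S^0_lS^0_nS^0_k-S^0_mS^0_nS^0_k$. Then $$\sum_{k\in\mathbb{Z}}S^{\mathrm{KZ}}_k(z)=\sum_{k\in\mathbb{Z}}S^0_k,$$ equivalently $\sum_{k}\sum_{(l,m,n)\in\mathrm{nr}_k}|H_{lmnk}(z)|^2T_{lmnk}=0$.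
   Context: $\mathrm{nr}_k:=\{(l,m,n)\in\mathbb{Z}^3:\ l+m=n+k,\ l\neq k,\ m\neq k\}$. $\Omega_{lmnk}:=\omega_0^2(l^2+m^2-n^2-k^2)$. The $H$-function is $H_{lmnk}(z):=(1-e^{j\Omega_{lmnk}z})/\Omega_{lmnk}$ if $\Omega_{lmnk}\neq0$ and $H_{lmnk}(z):=-jz$ if $\Omega_{lmnk}=0$ (here $j=\sqrt{-1}$). $T_{lmnk}$ is called the collision term. *)

theory Defs
  imports "HOL-Analysis.Analysis"
begin

definition nr :: "int \<Rightarrow> (int \<times> int \<times> int) set" where
  "nr k = {(l, m, n). l + m = n + k \<and> l \<noteq> k \<and> m \<noteq> k}"

definition Omega :: "real \<Rightarrow> int \<Rightarrow> int \<Rightarrow> int \<Rightarrow> int \<Rightarrow> real" where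
  "Omega \<omega>0 l m n k = \<omega>0\<^sup>2 * real_of_int (l\<^sup>2 + m\<^sup>2 - n\<^sup>2 - k\<^sup>2)"

definition Hfun :: "real \<Rightarrow> int \<Rightarrow> int \<Rightarrow> int \<Rightarrow> int \<Rightarrow> real \<Rightarrow> complex" where
  "Hfun \<omega>0 l m n k z =
     (let \<Omega> = Omega \<omega>0 l m n k in
      if \<Omega> \<noteq> 0 then (1 - exp (\<i> * complex_of_real (\<Omega> * z))) / complex_of_real \<Omega>
      else - \<i> * complex_of_real z)"

definition Tcoll :: "(int \<Rightarrow> real) \<Rightarrow> int \<Rightarrow> int \<Rightarrow> int \<Rightarrow> int \<Rightarrow> real" where
  "Tcoll S l m n k = S l * S m * S n + S l * S m * S k - S l * S n * S k - S m * S n * S k"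

definition SKZ :: "real \<Rightarrow> real \<Rightarrow> (int \<Rightarrow> real) \<Rightarrow> real \<Rightarrow> int \<Rightarrow> real" where
  "SKZ \<omega>0 \<epsilon> S z k = S k + 8 * \<epsilon>\<^sup>2 *
     (\<Sum>\<^sub>\<infinity>(l, m, n)\<in>nr k. (cmod (Hfun \<omega>0 l m n k z))\<^sup>2 * Tcoll S l m n k)"

end

theory Submission
  imports Defs
begin

text \<open>The exchange \<open>(l, m, n, k) \<mapsto> (n, k, l, m)\<close> of incoming and outgoing wave numbers
  preserves the resonance condition \<open>l + m = n + k\<close> (and the non-degeneracy conditions), reverses
  the sign of \<open>\<Omega>\<close>, hence leaves \<open>|H|\<close> unchanged, and reverses the sign of the collision term.
  So the total collision sum is antisymmetric under an involution and vanishes. Everything is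
  finite: \<open>T\<^sub>l\<^sub>m\<^sub>n\<^sub>k \<noteq> 0\<close> forces three of the four indices into the support of \<open>S\<^sup>0\<close>, and the
  resonance condition then pins down the fourth.\<close>

lemma sum_eq_0_if_antisymmetric_involution:
  fixes f :: "'a \<Rightarrow> 'b::linordered_ab_group_add"
  assumes "\<And>x. x \<in> A \<Longrightarrow> \<sigma> x \<in> A" and "\<And>x. x \<in> A \<Longrightarrow> \<sigma> (\<sigma> x) = x"
    and "\<And>x. x \<in> A \<Longrightarrow> f (\<sigma> x) = - f x"
  shows "sum f A = 0"
proof -
  have "sum f A = sum (f \<circ> \<sigma>) A"
    by (rule sum.reindex_bij_witness[where i = \<sigma> and j = \<sigma>]) (use assms in auto)
  also have "\<dots> = - sum f A"
    by (simp add: assms(3) sum_negf)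
  finally show ?thesis
    by simp
qed

lemma infsum_eq_finite_sum:
  assumes "finite B" and "B \<subseteq> A" and "\<And>x. x \<in> A - B \<Longrightarrow> f x = 0"
  shows "infsum f A = sum f B"
  by (rule infsumI, rule has_sum_finite_neutralI) (use assms in auto)

lemma cmod_one_minus_exp_uminus:
  "cmod (1 - exp (\<i> * complex_of_real (- x))) = cmod (1 - exp (\<i> * complex_of_real x))"
proof -
  have "1 - exp (\<i> * complex_of_real (- x)) = cnj (1 - exp (\<i> * complex_of_real x))"
    by (simp add: exp_cnj)
  then show ?thesis
    by (metis complex_mod_cnj)
qed

lemma Omega_swap: "Omega \<omega>0 n k l m = - Omega \<omega>0 l m n k"
  by (simp add: Omega_def algebra_simps)

lemma cmod_Hfun_swap: "cmod (Hfun \<omega>0 n k l m z) = cmod (Hfun \<omega>0 l m n k z)"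
proof -
  define \<Omega> where "\<Omega> = Omega \<omega>0 l m n k"
  have "Omega \<omega>0 n k l m = - \<Omega>"
    unfolding \<Omega>_def by (rule Omega_swap)
  moreover have "- \<Omega> * z = - (\<Omega> * z)"
    by simp
  ultimately show ?thesis
    using cmod_one_minus_exp_uminus[of "\<Omega> * z"]
    by (simp add: Hfun_def Let_def \<Omega>_def[symmetric] norm_divide)
qed

lemma Tcoll_swap: "Tcoll S n k l m = - Tcoll S l m n k"
  by (simp add: Tcoll_def algebra_simps)

definition triple_sums :: "'a::ab_group_add set \<Rightarrow> 'a set" where
  "triple_sums F = (\<lambda>(a, b, c). a + b - c) ` (F \<times> F \<times> F)"

lemma triple_sumsI: "a \<in> F \<Longrightarrow> b \<in> F \<Longrightarrow> c \<in> F \<Longrightarrow> a + b - c \<in> triple_sums F"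
  unfolding triple_sums_def by force

lemma finite_triple_sums: "finite F \<Longrightarrow> finite (triple_sums F)"
  by (simp add: triple_sums_def)

lemma subset_triple_sums: "F \<subseteq> triple_sums F"
  using triple_sumsI[of a F a a for a] by auto

lemma Tcoll_nonzero_imp_three_nonzero:
  assumes "Tcoll S l m n k \<noteq> 0"
  shows "(S l \<noteq> 0 \<and> S m \<noteq> 0 \<and> S n \<noteq> 0) \<or> (S l \<noteq> 0 \<and> S m \<noteq> 0 \<and> S k \<noteq> 0) \<or>
    (S l \<noteq> 0 \<and> S n \<noteq> 0 \<and> S k \<noteq> 0) \<or> (S m \<noteq> 0 \<and> S n \<noteq> 0 \<and> S k \<noteq> 0)"
  using assms unfolding Tcoll_def by auto

lemma Tcoll_nonzero_imp_triple_sums: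
  assumes "l + m = n + k" and "Tcoll S l m n k \<noteq> 0"
  shows "{l, m, n, k} \<subseteq> triple_sums {i. S i \<noteq> 0}"
proof -
  let ?F = "{i. S i \<noteq> 0}"
  have F_G: "?F \<subseteq> triple_sums ?F"
    by (rule subset_triple_sums)
  from Tcoll_nonzero_imp_three_nonzero[OF assms(2)] show ?thesis
  proof (elim disjE conjE)
    assume "S l \<noteq> 0" "S m \<noteq> 0" "S n \<noteq> 0"
    moreover have "k = l + m - n"
      using assms(1) by simp
    ultimately show ?thesis
      using triple_sumsI[of l ?F m n] F_G by auto
  next
    assume "S l \<noteq> 0" "S m \<noteq> 0" "S k \<noteq> 0"
    moreover have "n = l + m - k"
      using assms(1) by simp
    ultimately show ?thesis
      using triple_sumsI[of l ?F m k] F_G by auto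
  next
    assume "S l \<noteq> 0" "S n \<noteq> 0" "S k \<noteq> 0"
    moreover have "m = n + k - l"
      using assms(1) by simp
    ultimately show ?thesis
      using triple_sumsI[of n ?F k l] F_G by auto
  next
    assume "S m \<noteq> 0" "S n \<noteq> 0" "S k \<noteq> 0"
    moreover have "l = n + k - m"
      using assms(1) by simp
    ultimately show ?thesis
      using triple_sumsI[of n ?F k m] F_G by auto
  qed
qed

definition collision_sum :: "real \<Rightarrow> (int \<Rightarrow> real) \<Rightarrow> real \<Rightarrow> int \<Rightarrow> real" where
  "collision_sum \<omega>0 S z k =
     (\<Sum>\<^sub>\<infinity>(l, m, n)\<in>nr k. (cmod (Hfun \<omega>0 l m n k z))\<^sup>2 * Tcoll S l m n k)"

lemma SKZ_eq_collision_sum: "SKZ \<omega>0 \<epsilon> S z k = S k + 8 * \<epsilon>\<^sup>2 * collision_sum \<omega>0 S z k"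
  by (simp add: SKZ_def collision_sum_def)

lemma collision_sum_eq_0:
  assumes "k \<notin> triple_sums {i. S i \<noteq> 0}"
  shows "collision_sum \<omega>0 S z k = 0"
  unfolding collision_sum_def
  by (rule infsum_0) (use assms Tcoll_nonzero_imp_triple_sums in \<open>auto simp: nr_def\<close>)

lemma collision_sum_eq_sum:
  fixes S :: "int \<Rightarrow> real"
  defines "G \<equiv> triple_sums {i. S i \<noteq> 0}"
  assumes "finite {i. S i \<noteq> 0}"
  shows "collision_sum \<omega>0 S z k =
    (\<Sum>(l, m, n)\<in>nr k \<inter> G \<times> G \<times> G. (cmod (Hfun \<omega>0 l m n k z))\<^sup>2 * Tcoll S l m n k)"
  unfolding collision_sum_def
proof (rule infsum_eq_finite_sum)
  show "finite (nr k \<inter> G \<times> G \<times> G)"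
    using finite_triple_sums[OF assms(2)] by (simp add: G_def)
  show "(case x of (l, m, n) \<Rightarrow> (cmod (Hfun \<omega>0 l m n k z))\<^sup>2 * Tcoll S l m n k) = 0"
    if "x \<in> nr k - nr k \<inter> G \<times> G \<times> G" for x
    using that Tcoll_nonzero_imp_triple_sums[of _ _ _ k S] by (auto simp: nr_def G_def)
qed auto

lemma sum_collision_sum_eq_0:
  fixes S :: "int \<Rightarrow> real"
  defines "G \<equiv> triple_sums {i. S i \<noteq> 0}"
  assumes "finite {i. S i \<noteq> 0}"
  shows "(\<Sum>k\<in>G. collision_sum \<omega>0 S z k) = 0"
proof -
  define P where "P k = nr k \<inter> G \<times> G \<times> G" for k
  define c where "c = (\<lambda>(k, l, m, n). (cmod (Hfun \<omega>0 l m n k z))\<^sup>2 * Tcoll S l m n k)"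
  have fin: "finite G"
    using finite_triple_sums[OF assms(2)] by (simp add: G_def)
  have finite_P: "finite (P k)" for k
    using fin by (simp add: P_def)
  define \<sigma> :: "int \<times> int \<times> int \<times> int \<Rightarrow> int \<times> int \<times> int \<times> int"
    where "\<sigma> = (\<lambda>(k, l, m, n). (m, n, k, l))"
  have c_swap: "c (\<sigma> x) = - c x" for x
  proof -
    obtain k l m n where x: "x = (k, l, m, n)"
      by (cases x) auto
    show ?thesis
      using cmod_Hfun_swap[of \<omega>0 l m n k z] Tcoll_swap[of S l m n k] by (simp add: x \<sigma>_def c_def)
  qed
  have "(\<Sum>k\<in>G. collision_sum \<omega>0 S z k) = (\<Sum>k\<in>G. \<Sum>lmn\<in>P k. c (k, lmn))"
    using collision_sum_eq_sum[OF assms(2)] by (simp add: G_def P_def c_def case_prod_beta')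
  also have "\<dots> = sum c (Sigma G P)"
    using fin finite_P by (simp add: sum.Sigma)
  also have "\<dots> = 0"
  proof (rule sum_eq_0_if_antisymmetric_involution[where \<sigma> = \<sigma>])
    show "\<sigma> x \<in> Sigma G P" if "x \<in> Sigma G P" for x
      using that by (auto simp: P_def nr_def \<sigma>_def)
    show "\<sigma> (\<sigma> x) = x" for x
      by (auto simp: \<sigma>_def split: prod.splits)
    show "c (\<sigma> x) = - c x" for x
      by (rule c_swap)
  qed
  finally show ?thesis .
qed

theorem mainTheorem5:
  fixes \<omega>0 \<epsilon> z :: real and S :: "int \<Rightarrow> real"
  assumes "\<omega>0 > 0" and "z \<ge> 0" and "\<epsilon> > 0"
    and "finite {k. S k \<noteq> 0}"
  shows "(\<Sum>\<^sub>\<infinity>k\<in>UNIV. SKZ \<omega>0 \<epsilon> S z k) = (\<Sum>\<^sub>\<infinity>k\<in>UNIV. S k)"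
proof -
  let ?G = "triple_sums {k. S k \<noteq> 0}"
  have fin: "finite ?G"
    using assms(4) by (rule finite_triple_sums)
  have support: "{k. S k \<noteq> 0} \<subseteq> ?G"
    by (rule subset_triple_sums)
  have "(\<Sum>\<^sub>\<infinity>k\<in>UNIV. SKZ \<omega>0 \<epsilon> S z k) = (\<Sum>k\<in>?G. SKZ \<omega>0 \<epsilon> S z k)"
    by (rule infsum_eq_finite_sum)
      (use fin support in \<open>auto simp: SKZ_eq_collision_sum collision_sum_eq_0\<close>)
  also have "\<dots> = (\<Sum>k\<in>?G. S k) + 8 * \<epsilon>\<^sup>2 * (\<Sum>k\<in>?G. collision_sum \<omega>0 S z k)"
    by (simp add: SKZ_eq_collision_sum sum.distrib sum_distrib_left)
  also have "\<dots> = (\<Sum>k\<in>?G. S k)"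
    using sum_collision_sum_eq_0[OF assms(4)] by simp
  also have "\<dots> = (\<Sum>\<^sub>\<infinity>k\<in>UNIV. S k)"
    by (rule infsum_eq_finite_sum[symmetric]) (use fin support in auto)
  finally show ?thesis .
qed

end
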